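(* Let $r\ge2$, $k\ge3$ and let $\widehat{F}_k$ be an $r$-coloring of $K_k$. If $G$ is an $(r,\widehat{F}_k)$-extremal graph, $S\subseteq V(G)$ is an independent set and $H=G-S$, then for every $u,v\in S$ we have $\vec{u}_H=\vec{v}_H$.
   Context: An $r$-coloring of a graph assigns colors from $\{1,\dots,r\}$ to edges (not necessarily properly). A copy of $\widehat{F}_k$ in a colored graph is a set of $k$ pairwise adjacent vertices admitting a bijection to $V(K_k)$ under which two edges have equal colors iff their images have equal colors in $\widehat{F}_k$; a coloring is $\widehat{F}_k$-free if it has no copy. $c_{r,\widehat{F}_k}(G)$ is the number of $\widehat{F}_k$-free $r$-colorings of $E(G)$, $c_{r,\widehat{F}_k}(n)$ its maximum over $n$-vertex graphs, and an $n$-vertex graph $G$ is $(r,\widehat{F}_k)$-extremal if $c_{r,\widehat{F}_k}(G)=c_{r,\widehat{F}_k}(n)$. For a subgraph $H$ of $G$, a vertex $v\in V(G)\setminus V(H)$ and an $\widehat{F}_k$-free coloring $\widehat{H}$ of $H$, $c(v,\widehat{H})$ denotes the number of ways to $r$-color the edges of $G$ from $v$ to $V(H)$ so that the resulting coloring of $G[V(H)\cup\{v\}]$ is $\widehat{F}_k$-free. $\vec{v}_H$ is the vector indexed by the $\widehat{F}_k$-free $r$-colorings $\widehat{H}$ of $H$ with $\vec{v}_H(\widehat{H})=c(v,\widehat{H})$. *)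

theory Defs
  imports Main
begin

definition graph :: "'a set \<Rightarrow> 'a set set \<Rightarrow> bool" where
  "graph V E \<longleftrightarrow> finite V \<and> (\<forall>e\<in>E. e \<subseteq> V \<and> card e = 2)"

definition Kedges :: "nat \<Rightarrow> nat set set" where
  "Kedges k = {e. e \<subseteq> {0..<k} \<and> card e = 2}"

definition colorings :: "nat \<Rightarrow> 'a set set \<Rightarrow> ('a set \<Rightarrow> nat) set" where
  "colorings r E = {c. (\<forall>e\<in>E. c e \<in> {1..r}) \<and> (\<forall>e. e \<notin> E \<longrightarrow> c e = 0)}"

definition is_copy :: "nat \<Rightarrow> (nat set \<Rightarrow> nat) \<Rightarrow> 'a set set \<Rightarrow> ('a set \<Rightarrow> nat) \<Rightarrow> 'a set \<Rightarrow> bool" where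
  "is_copy k F E c K \<longleftrightarrow> card K = k \<and> (\<forall>e. e \<subseteq> K \<and> card e = 2 \<longrightarrow> e \<in> E) \<and>
     (\<exists>\<phi>. bij_betw \<phi> K {0..<k} \<and>
        (\<forall>e e'. e \<subseteq> K \<and> card e = 2 \<and> e' \<subseteq> K \<and> card e' = 2 \<longrightarrow>
            (c e = c e' \<longleftrightarrow> F (\<phi> ` e) = F (\<phi> ` e'))))"

definition F_free :: "nat \<Rightarrow> (nat set \<Rightarrow> nat) \<Rightarrow> 'a set \<Rightarrow> 'a set set \<Rightarrow> ('a set \<Rightarrow> nat) \<Rightarrow> bool" where
  "F_free k F V E c \<longleftrightarrow> \<not> (\<exists>K\<subseteq>V. is_copy k F E c K)"

definition free_colorings :: "nat \<Rightarrow> nat \<Rightarrow> (nat set \<Rightarrow> nat) \<Rightarrow> 'a set \<Rightarrow> 'a set set \<Rightarrow> ('a set \<Rightarrow> nat) set" where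
  "free_colorings r k F V E = {c \<in> colorings r E. F_free k F V E c}"

definition count_free :: "nat \<Rightarrow> nat \<Rightarrow> (nat set \<Rightarrow> nat) \<Rightarrow> 'a set \<Rightarrow> 'a set set \<Rightarrow> nat" where
  "count_free r k F V E = card (free_colorings r k F V E)"

definition count_free_n :: "nat \<Rightarrow> nat \<Rightarrow> (nat set \<Rightarrow> nat) \<Rightarrow> nat \<Rightarrow> nat" where
  "count_free_n r k F n = Max {count_free r k F {0..<n} E | E. graph {0..<n} E}"

definition extremal :: "nat \<Rightarrow> nat \<Rightarrow> (nat set \<Rightarrow> nat) \<Rightarrow> 'a set \<Rightarrow> 'a set set \<Rightarrow> bool" where
  "extremal r k F V E \<longleftrightarrow> graph V E \<and> count_free r k F V E = count_free_n r k F (card V)"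

definition star :: "'a set set \<Rightarrow> 'a set \<Rightarrow> 'a \<Rightarrow> 'a set set" where
  "star E VH v = {e \<in> E. \<exists>w\<in>VH. e = {v, w}}"

text \<open>c(v, cH): number of r-colorings of edges from v to V(H) such that the
  combined coloring of G[V(H) \<union> {v}] (H induced, with edges EH) is F-free.\<close>
definition ext_count :: "nat \<Rightarrow> nat \<Rightarrow> (nat set \<Rightarrow> nat) \<Rightarrow> 'a set set \<Rightarrow> 'a set \<Rightarrow> 'a set set \<Rightarrow> 'a \<Rightarrow> ('a set \<Rightarrow> nat) \<Rightarrow> nat" where
  "ext_count r k F E VH EH v cH = card {g \<in> colorings r (star E VH v).
       F_free k F (insert v VH) (EH \<union> star E VH v)
         (\<lambda>e. if e \<in> star E VH v then g e else cH e)}"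

text \<open>The vector v_H, indexed by F-free colorings of H (0 outside the index set).\<close>
definition ext_vec :: "nat \<Rightarrow> nat \<Rightarrow> (nat set \<Rightarrow> nat) \<Rightarrow> 'a set set \<Rightarrow> 'a set \<Rightarrow> 'a set set \<Rightarrow> 'a \<Rightarrow> ('a set \<Rightarrow> nat) \<Rightarrow> nat" where
  "ext_vec r k F E VH EH v = (\<lambda>cH. if cH \<in> free_colorings r k F VH EH then ext_count r k F E VH EH v cH else 0)"

end

theory Submission
  imports Defs "HOL-Analysis.Analysis"
begin

text \<open>Since \<open>S\<close> is independent, every copy of the colored \<open>K\<^sub>k\<close> lies in \<open>H\<close> or in
  \<open>H + s\<close> for a single \<open>s \<in> S\<close>. Hence an \<open>F\<close>-free coloring of \<open>G\<close> is the same as an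
  \<open>F\<close>-free coloring \<open>c\<^sub>H\<close> of \<open>H\<close> together with, independently for each \<open>s \<in> S\<close>, an admissible
  coloring of the edges from \<open>s\<close> to \<open>H\<close>, so that
  \<open>c(G) = \<Sum>\<^sub>c\<^sub>H \<Prod>\<^sub>s\<^sub>\<in>\<^sub>S c(s, c\<^sub>H)\<close>.
  Replacing every vertex of \<open>S\<close> by a clone of \<open>w \<in> S\<close> gives a graph on the same vertex set with
  \<open>\<Sum>\<^sub>c\<^sub>H c(w, c\<^sub>H)\<^bsup>|S|\<^esup>\<close> colorings, which is at most \<open>c(G)\<close> by extremality. Summing over
  \<open>w\<close> and comparing with AM-GM, \<open>|S| \<Prod> x\<^sub>s \<le> \<Sum> x\<^sub>s\<^bsup>|S|\<^esup>\<close>, forces equality in AM-GM for every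
  \<open>c\<^sub>H\<close>, i.e. all the numbers \<open>c(s, c\<^sub>H)\<close> coincide.\<close>

lemma is_copy_cong:
  assumes "\<And>e. e \<subseteq> K \<Longrightarrow> card e = 2 \<Longrightarrow> (e \<in> E \<longleftrightarrow> e \<in> E') \<and> c e = c' e"
  shows "is_copy k F E c K \<longleftrightarrow> is_copy k F E' c' K"
proof -
  have "(\<forall>e. e \<subseteq> K \<and> card e = 2 \<longrightarrow> e \<in> E) \<longleftrightarrow> (\<forall>e. e \<subseteq> K \<and> card e = 2 \<longrightarrow> e \<in> E')"
    using assms by blast
  moreover have "(\<forall>e e'. e \<subseteq> K \<and> card e = 2 \<and> e' \<subseteq> K \<and> card e' = 2 \<longrightarrow>
            (c e = c e' \<longleftrightarrow> F (\<phi> ` e) = F (\<phi> ` e'))) \<longleftrightarrow>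
           (\<forall>e e'. e \<subseteq> K \<and> card e = 2 \<and> e' \<subseteq> K \<and> card e' = 2 \<longrightarrow>
            (c' e = c' e' \<longleftrightarrow> F (\<phi> ` e) = F (\<phi> ` e')))" for \<phi>
    using assms by metis
  ultimately show ?thesis unfolding is_copy_def by simp
qed

lemma is_copy_of_image:
  assumes inj: "inj_on h V" and KV: "K \<subseteq> V" and EV: "\<forall>e\<in>E. e \<subseteq> V"
    and c'c: "\<And>e. e \<subseteq> V \<Longrightarrow> c' (h ` e) = c e"
    and copy: "is_copy k F ((`) h ` E) c' (h ` K)"
  shows "is_copy k F E c K"
proof -
  have injK: "inj_on h K" using inj KV inj_on_subset by blast
  have card_h: "card (h ` e) = card e" if "e \<subseteq> K" for e
    using card_image inj_on_subset[OF injK that] by blast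
  from copy obtain \<phi> where \<phi>: "bij_betw \<phi> (h ` K) {0..<k}"
    and pattern: "\<forall>e e'. e \<subseteq> h ` K \<and> card e = 2 \<and> e' \<subseteq> h ` K \<and> card e' = 2 \<longrightarrow>
            (c' e = c' e' \<longleftrightarrow> F (\<phi> ` e) = F (\<phi> ` e'))"
    unfolding is_copy_def by blast
  have card_K: "card K = k" using copy card_image[OF injK] unfolding is_copy_def by simp
  have edges: "e \<in> E" if "e \<subseteq> K" "card e = 2" for e
  proof -
    have "h ` e \<in> (`) h ` E"
      using copy that(2) card_h[OF that(1)] image_mono[OF that(1), of h] unfolding is_copy_def by simp
    then obtain e0 where "e0 \<in> E" "h ` e = h ` e0" by blast
    moreover have "e \<subseteq> V" using that(1) KV by blast
    moreover have "e0 \<subseteq> V" using EV \<open>e0 \<in> E\<close> by blast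
    ultimately have "e = e0" using inj_on_image_eq_iff[OF inj] by metis
    then show ?thesis using \<open>e0 \<in> E\<close> by simp
  qed
  have bij: "bij_betw (\<phi> \<circ> h) K {0..<k}"
    using bij_betw_trans[OF inj_on_imp_bij_betw[OF injK] \<phi>] .
  have colors: "c e = c e' \<longleftrightarrow> F ((\<phi> \<circ> h) ` e) = F ((\<phi> \<circ> h) ` e')"
    if "e \<subseteq> K" "card e = 2" "e' \<subseteq> K" "card e' = 2" for e e'
  proof -
    have "card (h ` e) = 2" "card (h ` e') = 2" using that card_h by simp_all
    then have "c' (h ` e) = c' (h ` e') \<longleftrightarrow> F (\<phi> ` h ` e) = F (\<phi> ` h ` e')"
      using pattern that by blast
    moreover have "c' (h ` e) = c e" "c' (h ` e') = c e'" using c'c that KV by auto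
    ultimately show ?thesis by (simp add: image_comp)
  qed
  show ?thesis unfolding is_copy_def using card_K edges bij colors by blast
qed

lemma F_free_image:
  assumes inj: "inj_on h V" and EV: "\<forall>e\<in>E. e \<subseteq> V"
    and c'c: "\<And>e. e \<subseteq> V \<Longrightarrow> c' (h ` e) = c e"
    and free: "F_free k F V E c"
  shows "F_free k F (h ` V) ((`) h ` E) c'"
  unfolding F_free_def
proof
  assume "\<exists>K'\<subseteq>h ` V. is_copy k F ((`) h ` E) c' K'"
  then obtain K where "K \<subseteq> V" "is_copy k F ((`) h ` E) c' (h ` K)"
    by (auto simp: subset_image_iff)
  then have "is_copy k F E c K" using is_copy_of_image[where c'=c' and c=c, OF inj \<open>K \<subseteq> V\<close> EV c'c] by blast
  then show False using free \<open>K \<subseteq> V\<close> unfolding F_free_def by blast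
qed

lemma coloring_outside:
  "c \<in> colorings r E \<Longrightarrow> e \<notin> E \<Longrightarrow> c e = 0"
  unfolding colorings_def by blast

lemma coloring_inside:
  "c \<in> colorings r E \<Longrightarrow> e \<in> E \<Longrightarrow> c e \<in> {1..r}"
  unfolding colorings_def by blast

lemma finite_colorings:
  assumes "finite E"
  shows "finite (colorings r E)"
proof -
  have "colorings r E \<subseteq> (\<lambda>f e. if e \<in> E then f e else 0) ` (E \<rightarrow>\<^sub>E {1..r})"
  proof
    fix c assume c: "c \<in> colorings r E"
    then have "c = (\<lambda>e. if e \<in> E then restrict c E e else 0)"
      by (auto simp: coloring_outside)
    moreover have "restrict c E \<in> E \<rightarrow>\<^sub>E {1..r}" using c unfolding colorings_def by auto
    ultimately show "c \<in> (\<lambda>f e. if e \<in> E then f e else 0) ` (E \<rightarrow>\<^sub>E {1..r})" by blast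
  qed
  moreover have "finite (E \<rightarrow>\<^sub>E {1..r})" using assms by (simp add: finite_PiE)
  ultimately show ?thesis using finite_subset by blast
qed

lemma finite_free_colorings:
  "finite E \<Longrightarrow> finite (free_colorings r k F V E)"
  unfolding free_colorings_def using finite_colorings by (rule finite_subset[rotated]) auto

lemma card_mult_prod_le_sum_power:
  fixes x :: "'a \<Rightarrow> real"
  assumes "finite S" and x: "\<And>i. i \<in> S \<Longrightarrow> x i \<ge> 0"
  shows "card S * (\<Prod>i\<in>S. x i) \<le> (\<Sum>i\<in>S. x i ^ card S)"
proof (cases "S = {}")
  case False
  define n where "n = card S"
  have n: "n > 0" using False assms(1) by (simp add: n_def card_gt_0_iff)
  have P: "(\<Prod>i\<in>S. x i) \<ge> 0" using x by (simp add: prod_nonneg)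
  have "(\<Prod>i\<in>S. x i) = ((\<Prod>i\<in>S. x i) ^ n) powr (1 / n)"
    using n P by (cases "(\<Prod>i\<in>S. x i) = 0") (simp_all add: powr_powr flip: powr_realpow)
  also have "\<dots> = (\<Prod>i\<in>S. x i ^ n) powr (1 / n)" by (simp add: prod_power_distrib)
  also have "\<dots> \<le> (\<Sum>i\<in>S. x i ^ n / n)"
    using arith_geom_mean[OF assms(1) False] x by (simp add: n_def)
  finally have "(\<Prod>i\<in>S. x i) \<le> (\<Sum>i\<in>S. x i ^ n) / n"
    by (simp add: sum_divide_distrib)
  then show ?thesis using n by (simp add: n_def field_simps)
qed simp

lemma two_sqrt_mult_less_add:
  fixes p q :: real
  assumes "p \<ge> 0" "q \<ge> 0" "p \<noteq> q"
  shows "2 * sqrt (p * q) < p + q"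
proof -
  have "0 < (sqrt p - sqrt q)\<^sup>2" using assms by simp
  then show ?thesis using assms by (simp add: power2_diff real_sqrt_mult)
qed

lemma card_mult_prod_less_sum_power:
  fixes x :: "'a \<Rightarrow> real"
  assumes fin: "finite S" and x: "\<And>i. i \<in> S \<Longrightarrow> x i \<ge> 0"
    and "u \<in> S" "v \<in> S" "x u \<noteq> x v"
  shows "card S * (\<Prod>i\<in>S. x i) < (\<Sum>i\<in>S. x i ^ card S)"
proof -
  define n where "n = card S"
  have "n > 0" using assms by (auto simp: n_def card_gt_0_iff)
  have "u \<noteq> v" using assms by auto
  define R where "R = S - {u, v}"
  have S: "S = insert u (insert v R)" and "finite R" "u \<notin> R" "v \<notin> R"
    using assms by (auto simp: R_def)
  \<comment> \<open>Replacing both \<open>x u\<close> and \<open>x v\<close> by their geometric mean keeps the product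
    and strictly decreases the sum of \<open>n\<close>-th powers.\<close>
  define g where "g = sqrt (x u * x v)"
  define y where "y = x(u := g, v := g)"
  have y: "\<And>i. i \<in> S \<Longrightarrow> y i \<ge> 0" using x assms(3,4) by (simp add: y_def g_def)
  have prod_S: "prod f S = f u * f v * prod f R" and sum_S: "sum f' S = f' u + f' v + sum f' R"
    for f :: "'a \<Rightarrow> real" and f'
    using S \<open>finite R\<close> \<open>u \<notin> R\<close> \<open>v \<notin> R\<close> \<open>u \<noteq> v\<close> by (simp_all add: ac_simps)
  have "\<And>i. i \<in> R \<Longrightarrow> y i = x i" using \<open>u \<notin> R\<close> \<open>v \<notin> R\<close> by (auto simp: y_def)
  then have yR: "prod y R = prod x R" "(\<Sum>i\<in>R. y i ^ n) = (\<Sum>i\<in>R. x i ^ n)" by simp_all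
  have yuv: "y u = g" "y v = g" using \<open>u \<noteq> v\<close> by (simp_all add: y_def)
  have "g * g = x u * x v" using x \<open>u \<in> S\<close> \<open>v \<in> S\<close> by (simp add: g_def)
  then have prod_y: "(\<Prod>i\<in>S. y i) = (\<Prod>i\<in>S. x i)" using prod_S yR yuv by simp
  have "x u ^ n \<noteq> x v ^ n"
    using \<open>x u \<noteq> x v\<close> \<open>n > 0\<close> x \<open>u \<in> S\<close> \<open>v \<in> S\<close> power_eq_imp_eq_base by blast
  moreover have "g ^ n = sqrt (x u ^ n * x v ^ n)"
    by (simp add: g_def real_sqrt_power flip: power_mult_distrib)
  ultimately have "2 * g ^ n < x u ^ n + x v ^ n"
    using two_sqrt_mult_less_add[of "x u ^ n" "x v ^ n"] x \<open>u \<in> S\<close> \<open>v \<in> S\<close> by simp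
  then have "(\<Sum>i\<in>S. y i ^ n) < (\<Sum>i\<in>S. x i ^ n)"
    using sum_S[of "\<lambda>i. y i ^ n"] sum_S[of "\<lambda>i. x i ^ n"] yR yuv by simp
  moreover have "n * (\<Prod>i\<in>S. y i) \<le> (\<Sum>i\<in>S. y i ^ n)"
    using card_mult_prod_le_sum_power[OF fin y] by (simp add: n_def)
  ultimately show ?thesis using prod_y by (simp add: n_def)
qed

lemma eq_if_sum_power_sums_le:
  fixes X :: "'s \<Rightarrow> 'c \<Rightarrow> nat"
  assumes "finite A" "finite S"
    and le: "(\<Sum>s\<in>S. \<Sum>c\<in>A. X s c ^ card S) \<le> card S * (\<Sum>c\<in>A. \<Prod>s\<in>S. X s c)"
    and "c \<in> A" "u \<in> S" "v \<in> S"
  shows "X u c = X v c"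
proof (rule ccontr)
  assume "X u c \<noteq> X v c"
  have "card S * (\<Prod>s\<in>S. X s c') \<le> (\<Sum>s\<in>S. X s c' ^ card S)" for c'
  proof -
    have "real (card S) * (\<Prod>s\<in>S. real (X s c')) \<le> (\<Sum>s\<in>S. real (X s c') ^ card S)"
      using card_mult_prod_le_sum_power[OF \<open>finite S\<close>] by simp
    then have "real (card S * (\<Prod>s\<in>S. X s c')) \<le> real (\<Sum>s\<in>S. X s c' ^ card S)" by simp
    then show ?thesis by (simp only: of_nat_le_iff)
  qed
  moreover have "card S * (\<Prod>s\<in>S. X s c) < (\<Sum>s\<in>S. X s c ^ card S)"
  proof -
    have "real (card S) * (\<Prod>s\<in>S. real (X s c)) < (\<Sum>s\<in>S. real (X s c) ^ card S)"
      using card_mult_prod_less_sum_power[OF \<open>finite S\<close>] assms \<open>X u c \<noteq> X v c\<close> by simp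
    then have "real (card S * (\<Prod>s\<in>S. X s c)) < real (\<Sum>s\<in>S. X s c ^ card S)" by simp
    then show ?thesis by (simp only: of_nat_less_iff)
  qed
  ultimately have "(\<Sum>c\<in>A. card S * (\<Prod>s\<in>S. X s c)) < (\<Sum>c\<in>A. \<Sum>s\<in>S. X s c ^ card S)"
    using \<open>finite A\<close> \<open>c \<in> A\<close> by (intro sum_strict_mono_ex1) auto
  then show False using le by (simp add: sum_distrib_left sum.swap[of _ S])
qed

lemma finite_edges: "graph V E \<Longrightarrow> finite E"
  unfolding graph_def by (meson Pow_iff finite_Pow_iff finite_subset subsetI)

lemma star_iff: "e \<in> star E W s \<longleftrightarrow> e \<in> E \<and> (\<exists>w\<in>W. e = {s, w})"
  unfolding star_def by blast

lemma star_subset: "star E W s \<subseteq> E"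
  by (auto simp: star_iff)

lemma F_free_cong:
  assumes "\<And>e. e \<subseteq> W \<Longrightarrow> card e = 2 \<Longrightarrow> (e \<in> E \<longleftrightarrow> e \<in> E') \<and> c e = c' e"
  shows "F_free k F W E c \<longleftrightarrow> F_free k F W E' c'"
proof -
  have "is_copy k F E c K \<longleftrightarrow> is_copy k F E' c' K" if "K \<subseteq> W" for K
    using that by (intro is_copy_cong assms) blast
  then show ?thesis unfolding F_free_def by blast
qed

lemma F_free_mono: "W' \<subseteq> W \<Longrightarrow> F_free k F W E c \<Longrightarrow> F_free k F W' E c"
  unfolding F_free_def by blast

definition restrict_coloring :: "('b \<Rightarrow> nat) \<Rightarrow> 'b set \<Rightarrow> 'b \<Rightarrow> nat" where
  "restrict_coloring c X e = (if e \<in> X then c e else 0)"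

lemma restrict_coloring_in_colorings:
  "c \<in> colorings r E \<Longrightarrow> X \<subseteq> E \<Longrightarrow> restrict_coloring c X \<in> colorings r X"
  unfolding colorings_def restrict_coloring_def by auto

lemma star_eq: "star E W w = {{w, x} | x. x \<in> W \<and> {w, x} \<in> E}"
  unfolding star_def by blast

lemma graph_image:
  assumes "inj_on h V" "graph V E"
  shows "graph (h ` V) ((`) h ` E)"
  unfolding graph_def
proof (intro conjI ballI)
  show "finite (h ` V)" using assms(2) unfolding graph_def by simp
  fix e' assume "e' \<in> (`) h ` E"
  then obtain e where e: "e \<in> E" "e' = h ` e" by blast
  then have "e \<subseteq> V" "card e = 2" using assms(2) unfolding graph_def by auto
  then show "e' \<subseteq> h ` V" "card e' = 2"
    using e(2) card_image[OF inj_on_subset[OF assms(1)]] by auto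
qed

definition relabel_coloring :: "('a \<Rightarrow> 'b) \<Rightarrow> 'a set \<Rightarrow> 'a set set \<Rightarrow> ('a set \<Rightarrow> nat) \<Rightarrow> 'b set \<Rightarrow> nat" where
  "relabel_coloring h V E c = restrict_coloring (\<lambda>e'. c (inv_into V h ` e')) ((`) h ` E)"

lemma relabel_coloring_image:
  assumes inj: "inj_on h V" and EV: "\<forall>e\<in>E. e \<subseteq> V" and c: "c \<in> colorings r E" and "e \<subseteq> V"
  shows "relabel_coloring h V E c (h ` e) = c e"
proof (cases "h ` e \<in> (`) h ` E")
  case True
  then obtain e0 where "e0 \<in> E" "h ` e = h ` e0" by blast
  then have "e = e0" using inj_on_image_eq_iff[OF inj \<open>e \<subseteq> V\<close>] EV by blast
  moreover have "inv_into V h ` h ` e = e" using inj \<open>e \<subseteq> V\<close> by simp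
  ultimately show ?thesis using True by (simp add: relabel_coloring_def restrict_coloring_def)
next
  case False
  then have "e \<notin> E" by blast
  then show ?thesis
    using False coloring_outside[OF c] by (simp add: relabel_coloring_def restrict_coloring_def)
qed

lemma relabel_coloring_in_free_colorings:
  assumes inj: "inj_on h V" and EV: "\<forall>e\<in>E. e \<subseteq> V" and c: "c \<in> free_colorings r k F V E"
  shows "relabel_coloring h V E c \<in> free_colorings r k F (h ` V) ((`) h ` E)"
proof -
  have c_col: "c \<in> colorings r E" and "F_free k F V E c"
    using c unfolding free_colorings_def by auto
  then have "F_free k F (h ` V) ((`) h ` E) (relabel_coloring h V E c)"
    using F_free_image[OF inj EV] relabel_coloring_image[OF inj EV c_col] by blast
  moreover have "relabel_coloring h V E c \<in> colorings r ((`) h ` E)"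
  proof -
    have "relabel_coloring h V E c e' \<in> {1..r}" if "e' \<in> (`) h ` E" for e'
      using that relabel_coloring_image[OF inj EV c_col] coloring_inside[OF c_col] EV by auto
    then show ?thesis
      unfolding colorings_def by (simp add: relabel_coloring_def restrict_coloring_def)
  qed
  ultimately show ?thesis unfolding free_colorings_def by blast
qed

lemma count_free_le_image:
  assumes inj: "inj_on h V" and G: "graph V E"
  shows "count_free r k F V E \<le> count_free r k F (h ` V) ((`) h ` E)"
proof -
  have EV: "\<forall>e\<in>E. e \<subseteq> V" using G unfolding graph_def by blast
  have "inj_on (relabel_coloring h V E) (free_colorings r k F V E)"
  proof (rule inj_onI)
    fix c c' assume "c \<in> free_colorings r k F V E" "c' \<in> free_colorings r k F V E"
      and same: "relabel_coloring h V E c = relabel_coloring h V E c'"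
    then have c: "c \<in> colorings r E" and c': "c' \<in> colorings r E"
      unfolding free_colorings_def by auto
    show "c = c'"
    proof
      fix e show "c e = c' e"
      proof (cases "e \<in> E")
        case True
        then show ?thesis
          using relabel_coloring_image[OF inj EV c] relabel_coloring_image[OF inj EV c'] same EV
          by metis
      qed (simp add: coloring_outside[OF c] coloring_outside[OF c'])
    qed
  qed
  moreover have "finite (free_colorings r k F (h ` V) ((`) h ` E))"
    using finite_edges[OF G] by (intro finite_free_colorings) simp
  ultimately show ?thesis
    unfolding count_free_def
    using relabel_coloring_in_free_colorings[OF inj EV] by (intro card_inj_on_le) blast+
qed

lemma count_free_le_count_free_n:
  assumes G: "graph V E"
  shows "count_free r k F V E \<le> count_free_n r k F (card V)"
proof -
  define n where "n = card V"
  obtain h where h: "bij_betw h V {0..<n}"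
    using G finite_same_card_bij[of V "{0..<n}"] unfolding graph_def n_def by auto
  then have inj: "inj_on h V" and hV: "h ` V = {0..<n}" unfolding bij_betw_def by blast+
  have "count_free r k F V E \<le> count_free r k F {0..<n} ((`) h ` E)"
    using count_free_le_image[OF inj G] hV by simp
  also have "\<dots> \<le> count_free_n r k F n"
    unfolding count_free_n_def
  proof (rule Max_ge)
    have "finite {E. graph {0..<n} E}"
      by (rule finite_subset[of _ "Pow (Pow {0..<n})"]) (auto simp: graph_def)
    then show "finite {count_free r k F {0..<n} E |E. graph {0..<n} E}"
      by (simp add: setcompr_eq_image)
    show "count_free r k F {0..<n} ((`) h ` E) \<in> {count_free r k F {0..<n} E |E. graph {0..<n} E}"
      using graph_image[OF inj G] hV by auto
  qed
  finally show ?thesis by (simp add: n_def)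
qed

lemma extension_image:
  assumes inv: "\<And>x. h (h x) = x" and EH_fixed: "\<forall>e\<in>EH. h ` e = e"
    and EV: "\<forall>e\<in>EH \<union> st. e \<subseteq> W"
    and cH: "cH \<in> colorings r EH" and g: "g \<in> colorings r st"
    and free: "F_free k F W (EH \<union> st) (\<lambda>e. if e \<in> st then g e else cH e)"
  shows "(\<lambda>e. g (h ` e)) \<in> colorings r ((`) h ` st) \<and>
    F_free k F (h ` W) (EH \<union> (`) h ` st) (\<lambda>e. if e \<in> (`) h ` st then g (h ` e) else cH e)"
proof -
  have hh: "h ` h ` e = e" for e using inv by (simp add: image_image)
  have mem: "h ` e \<in> (`) h ` st \<longleftrightarrow> e \<in> st" for e
    by (metis hh imageE image_eqI)
  have cH_h: "cH (h ` e) = cH e" for e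
  proof (cases "e \<in> EH")
    case False
    then have "h ` e \<notin> EH" using EH_fixed hh by metis
    with False show ?thesis using coloring_outside[OF cH] by simp
  qed (simp add: EH_fixed)
  have mem': "e \<in> (`) h ` st \<longleftrightarrow> h ` e \<in> st" for e
    using mem[of "h ` e"] by (simp add: hh)
  have "(\<lambda>e. g (h ` e)) \<in> colorings r ((`) h ` st)"
    using g unfolding colorings_def by (simp add: mem' hh)
  moreover have "inj_on h W" using inv by (metis inj_onI)
  then have "F_free k F (h ` W) ((`) h ` (EH \<union> st)) (\<lambda>e. if e \<in> (`) h ` st then g (h ` e) else cH e)"
    by (rule F_free_image[OF _ EV _ free]) (simp add: mem hh cH_h)
  moreover have "(`) h ` EH = EH" using EH_fixed by force
  ultimately show ?thesis by (simp add: image_Un)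
qed

lemma card_extensions_image:
  assumes inv: "\<And>x. h (h x) = x" and EH_fixed: "\<forall>e\<in>EH. h ` e = e"
    and EV: "\<forall>e\<in>EH \<union> st. e \<subseteq> W" and EV': "\<forall>e\<in>EH \<union> (`) h ` st. e \<subseteq> h ` W"
    and cH: "cH \<in> colorings r EH"
  shows "card {g \<in> colorings r st. F_free k F W (EH \<union> st) (\<lambda>e. if e \<in> st then g e else cH e)} =
    card {g \<in> colorings r ((`) h ` st).
      F_free k F (h ` W) (EH \<union> (`) h ` st) (\<lambda>e. if e \<in> (`) h ` st then g e else cH e)}"
    (is "card ?X = card ?Y")
proof (rule bij_betw_same_card[of "\<lambda>g e. g (h ` e)"], rule bij_betw_byWitness[where f' = "\<lambda>g e. g (h ` e)"])
  have hh: "h ` h ` e = e" for e using inv by (simp add: image_image)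
  then have W: "h ` h ` W = W" and st: "(`) h ` (`) h ` st = st" by (simp_all add: image_image)
  show "\<forall>g\<in>?X. (\<lambda>e. g (h ` h ` e)) = g" "\<forall>g\<in>?Y. (\<lambda>e. g (h ` h ` e)) = g"
    using hh by simp_all
  show "(\<lambda>g e. g (h ` e)) ` ?X \<subseteq> ?Y"
    using extension_image[OF inv EH_fixed EV cH] by auto
  show "(\<lambda>g e. g (h ` e)) ` ?Y \<subseteq> ?X"
    using extension_image[OF inv EH_fixed EV' cH] by (auto simp: W st)
qed

locale independent_set =
  fixes V :: "'a set" and E :: "'a set set" and S :: "'a set"
  assumes graph: "graph V E" and S_subset: "S \<subseteq> V" and independent: "\<forall>e\<in>E. \<not> e \<subseteq> S"
begin

abbreviation "VH \<equiv> V - S"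
abbreviation "EH \<equiv> {e \<in> E. e \<inter> S = {}}"

lemma finite_S: "finite S"
  using graph S_subset finite_subset unfolding graph_def by blast

lemma edge_subset: "e \<in> E \<Longrightarrow> e \<subseteq> V"
  using graph unfolding graph_def by blast

lemma edge_cases:
  assumes "e \<in> E"
  shows "e \<inter> S = {} \<or> (\<exists>s\<in>S. \<exists>x\<in>VH. e = {s, x})"
proof -
  obtain a b where e: "e = {a, b}" "a \<noteq> b"
    using graph assms unfolding graph_def by (auto simp: card_2_iff)
  have "\<not> e \<subseteq> S" using independent assms by blast
  moreover have "a \<in> V" "b \<in> V" using e edge_subset[OF assms] by auto
  ultimately consider "a \<in> S" "b \<in> VH" | "b \<in> S" "a \<in> VH" | "a \<notin> S" "b \<notin> S"
    using e by blast
  then show ?thesis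
  proof cases
    case 2
    then show ?thesis using e by (metis insert_commute)
  qed (use e in blast)+
qed

lemma star_disjoint_EH: "s \<in> S \<Longrightarrow> e \<in> star E VH s \<Longrightarrow> e \<notin> EH"
  by (auto simp: star_iff)

lemma edge_in_EH_or_star:
  assumes "e \<in> E"
  shows "e \<in> EH \<or> (\<exists>s\<in>S. e \<in> star E VH s)"
  using edge_cases[OF assms] assms by (auto simp: star_iff)

lemma edge_within_insert:
  assumes "s \<in> S" "e \<subseteq> insert s VH" "e \<in> E"
  shows "e \<in> EH \<union> star E VH s"
  using edge_cases[OF assms(3)]
proof
  assume "\<exists>t\<in>S. \<exists>x\<in>VH. e = {t, x}"
  then obtain t x where "t \<in> S" "x \<in> VH" "e = {t, x}" by blast
  moreover from this have "t = s" using assms(2) by auto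
  ultimately show ?thesis using assms(3) by (auto simp: star_iff)
qed (use assms(3) in blast)

lemma clique_within_insert:
  assumes "K \<subseteq> V" "\<And>e. e \<subseteq> K \<Longrightarrow> card e = 2 \<Longrightarrow> e \<in> E"
  shows "K \<subseteq> VH \<or> (\<exists>s\<in>S. K \<subseteq> insert s VH)"
proof (cases "K \<inter> S = {}")
  case False
  then obtain s where s: "s \<in> K" "s \<in> S" by blast
  have "t \<in> insert s VH" if t: "t \<in> K" for t
  proof (rule ccontr)
    assume "t \<notin> insert s VH"
    then have "t \<in> S" "t \<noteq> s" using assms(1) t by auto
    then have "{s, t} \<in> E" using assms(2)[of "{s, t}"] t s by auto
    moreover have "{s, t} \<subseteq> S" using \<open>t \<in> S\<close> s by blast
    ultimately show False using independent by blast
  qed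
  then show ?thesis using s by blast
qed (use assms(1) in blast)

lemma F_free_iff_parts:
  "F_free k F V E c \<longleftrightarrow> F_free k F VH E c \<and> (\<forall>s\<in>S. F_free k F (insert s VH) E c)"
proof
  assume free: "F_free k F V E c"
  show "F_free k F VH E c \<and> (\<forall>s\<in>S. F_free k F (insert s VH) E c)"
    using S_subset by (intro conjI ballI F_free_mono[OF _ free]) auto
next
  assume parts: "F_free k F VH E c \<and> (\<forall>s\<in>S. F_free k F (insert s VH) E c)"
  show "F_free k F V E c"
    unfolding F_free_def
  proof
    assume "\<exists>K\<subseteq>V. is_copy k F E c K"
    then obtain K where "K \<subseteq> V" and copy: "is_copy k F E c K" by blast
    moreover have "\<And>e. e \<subseteq> K \<Longrightarrow> card e = 2 \<Longrightarrow> e \<in> E"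
      using copy unfolding is_copy_def by blast
    ultimately have "K \<subseteq> VH \<or> (\<exists>s\<in>S. K \<subseteq> insert s VH)"
      using clique_within_insert by blast
    then show False
    proof
      assume "K \<subseteq> VH"
      with copy have "\<not> F_free k F VH E c" unfolding F_free_def by blast
      with parts show False by blast
    next
      assume "\<exists>s\<in>S. K \<subseteq> insert s VH"
      then obtain s where "s \<in> S" "K \<subseteq> insert s VH" by blast
      with copy have "\<not> F_free k F (insert s VH) E c" unfolding F_free_def by blast
      with parts \<open>s \<in> S\<close> show False by blast
    qed
  qed
qed

lemma F_free_H_cong:
  assumes "\<And>e. e \<subseteq> VH \<Longrightarrow> card e = 2 \<Longrightarrow> c' e = c e"
  shows "F_free k F VH EH c' \<longleftrightarrow> F_free k F VH E c"
proof (rule F_free_cong)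
  fix e assume "e \<subseteq> VH" "card e = 2"
  then have "e \<inter> S = {}" by blast
  then show "(e \<in> EH \<longleftrightarrow> e \<in> E) \<and> c' e = c e" using assms \<open>e \<subseteq> VH\<close> \<open>card e = 2\<close> by simp
qed

lemma F_free_insert_cong:
  assumes "s \<in> S" and "\<And>e. e \<subseteq> insert s VH \<Longrightarrow> card e = 2 \<Longrightarrow> c' e = c e"
  shows "F_free k F (insert s VH) (EH \<union> star E VH s) c' \<longleftrightarrow> F_free k F (insert s VH) E c"
proof (rule F_free_cong)
  fix e assume e: "e \<subseteq> insert s VH" "card e = 2"
  have "e \<in> E \<Longrightarrow> e \<in> EH \<union> star E VH s" using edge_within_insert[OF assms(1) e(1)] .
  moreover have "e \<in> EH \<union> star E VH s \<Longrightarrow> e \<in> E" using star_subset[of E VH s] by blast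
  moreover have "c' e = c e" using assms(2) e .
  ultimately show "(e \<in> EH \<union> star E VH s \<longleftrightarrow> e \<in> E) \<and> c' e = c e" by blast
qed

definition extensions :: "nat \<Rightarrow> nat \<Rightarrow> (nat set \<Rightarrow> nat) \<Rightarrow> ('a set \<Rightarrow> nat) \<Rightarrow> 'a \<Rightarrow> ('a set \<Rightarrow> nat) set" where
  "extensions r k F cH s = {g \<in> colorings r (star E VH s).
       F_free k F (insert s VH) (EH \<union> star E VH s) (\<lambda>e. if e \<in> star E VH s then g e else cH e)}"

lemma card_extensions: "card (extensions r k F cH s) = ext_count r k F E VH EH s cH"
  unfolding ext_count_def extensions_def ..

text \<open>The edge sets \<open>EH\<close> and \<open>star E VH s\<close>, \<open>s \<in> S\<close>, are pairwise disjoint, so at most one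
  summand of \<open>glue cH g e\<close> is nonzero.\<close>

definition glue :: "('a set \<Rightarrow> nat) \<Rightarrow> ('a \<Rightarrow> 'a set \<Rightarrow> nat) \<Rightarrow> 'a set \<Rightarrow> nat" where
  "glue cH g e = cH e + (\<Sum>s\<in>S. g s e)"

context
  fixes r :: nat and cH :: "'a set \<Rightarrow> nat" and g :: "'a \<Rightarrow> 'a set \<Rightarrow> nat"
  assumes cH: "cH \<in> colorings r EH"
    and g: "\<And>s. s \<in> S \<Longrightarrow> g s \<in> colorings r (star E VH s)"
begin

lemma glue_disjoint:
  assumes "e \<inter> S = {}"
  shows "glue cH g e = cH e"
proof -
  have "g s e = 0" if "s \<in> S" for s
  proof -
    have "e \<notin> star E VH s" using that assms by (auto simp: star_iff)
    then show ?thesis by (rule coloring_outside[OF g[OF that]])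
  qed
  then show ?thesis by (simp add: glue_def)
qed

lemma glue_insert:
  assumes "s \<in> S" "e \<subseteq> insert s VH"
  shows "glue cH g e = (if e \<in> star E VH s then g s e else cH e)"
proof -
  have "g t e = 0" if "t \<in> S" "t \<noteq> s" for t
  proof -
    have "e \<notin> star E VH t" using assms that by (auto simp: star_iff)
    then show ?thesis by (rule coloring_outside[OF g[OF \<open>t \<in> S\<close>]])
  qed
  then have "(\<Sum>t\<in>S - {s}. g t e) = 0" by (intro sum.neutral) blast
  then have sum: "(\<Sum>t\<in>S. g t e) = g s e" using sum.remove[OF finite_S assms(1), of "\<lambda>t. g t e"] by simp
  show ?thesis
  proof (cases "e \<in> star E VH s")
    case True
    then have "cH e = 0" by (rule coloring_outside[OF cH star_disjoint_EH[OF assms(1)]])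
    then show ?thesis using True sum by (simp add: glue_def)
  next
    case False
    then have "g s e = 0" by (rule coloring_outside[OF g[OF assms(1)]])
    then show ?thesis using False sum by (simp add: glue_def)
  qed
qed

lemma glue_in_colorings: "glue cH g \<in> colorings r E"
  unfolding colorings_def
proof (intro CollectI conjI ballI allI impI)
  fix e assume "e \<in> E"
  from edge_in_EH_or_star[OF this] show "glue cH g e \<in> {1..r}"
  proof
    assume "e \<in> EH"
    then have "glue cH g e = cH e" by (intro glue_disjoint) simp
    then show ?thesis using coloring_inside[OF cH \<open>e \<in> EH\<close>] by simp
  next
    assume "\<exists>s\<in>S. e \<in> star E VH s"
    then obtain s where s: "s \<in> S" "e \<in> star E VH s" by blast
    then have "e \<subseteq> insert s VH" by (auto simp: star_iff)
    then have "glue cH g e = g s e" using glue_insert s by simp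
    then show ?thesis using coloring_inside[OF g[OF s(1)] s(2)] by simp
  qed
next
  fix e assume "e \<notin> E"
  then have "cH e = 0" by (intro coloring_outside[OF cH]) simp
  moreover have "g s e = 0" if "s \<in> S" for s
    using \<open>e \<notin> E\<close> star_subset[of E VH s] by (intro coloring_outside[OF g[OF that]]) blast
  ultimately show "glue cH g e = 0" by (simp add: glue_def)
qed

lemma restrict_glue_EH: "restrict_coloring (glue cH g) EH = cH"
proof
  fix e
  have "e \<in> EH \<Longrightarrow> glue cH g e = cH e" by (intro glue_disjoint) simp
  moreover have "e \<notin> EH \<Longrightarrow> cH e = 0" by (rule coloring_outside[OF cH])
  ultimately show "restrict_coloring (glue cH g) EH e = cH e"
    by (auto simp: restrict_coloring_def)
qed

lemma restrict_glue_star: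
  assumes "s \<in> S"
  shows "restrict_coloring (glue cH g) (star E VH s) = g s"
proof
  fix e
  have "glue cH g e = g s e" if "e \<in> star E VH s"
  proof -
    have "e \<subseteq> insert s VH" using that by (auto simp: star_iff)
    then show ?thesis using glue_insert[OF assms] that by simp
  qed
  moreover have "e \<notin> star E VH s \<Longrightarrow> g s e = 0"
    by (rule coloring_outside[OF g[OF assms]])
  ultimately show "restrict_coloring (glue cH g) (star E VH s) e = g s e"
    by (auto simp: restrict_coloring_def)
qed

end

lemma glue_in_free_colorings:
  assumes cH: "cH \<in> free_colorings r k F VH EH" and g: "g \<in> PiE S (extensions r k F cH)"
  shows "glue cH g \<in> free_colorings r k F V E"
proof -
  have cH_col: "cH \<in> colorings r EH" and cH_free: "F_free k F VH EH cH"
    using cH unfolding free_colorings_def by auto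
  have g_col: "\<And>s. s \<in> S \<Longrightarrow> g s \<in> colorings r (star E VH s)"
    and g_free: "\<And>s. s \<in> S \<Longrightarrow> F_free k F (insert s VH) (EH \<union> star E VH s)
         (\<lambda>e. if e \<in> star E VH s then g s e else cH e)"
    using g unfolding extensions_def by auto
  have "F_free k F VH EH cH \<longleftrightarrow> F_free k F VH E (glue cH g)"
    by (rule F_free_H_cong, rule glue_disjoint[OF cH_col g_col, symmetric]) auto
  moreover have "F_free k F (insert s VH) (EH \<union> star E VH s)
      (\<lambda>e. if e \<in> star E VH s then g s e else cH e) \<longleftrightarrow> F_free k F (insert s VH) E (glue cH g)"
    if "s \<in> S" for s
    by (rule F_free_insert_cong[OF that], rule glue_insert[OF cH_col g_col that, symmetric])
  ultimately have "F_free k F V E (glue cH g)"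
    using cH_free g_free F_free_iff_parts[of k F "glue cH g"] by blast
  with glue_in_colorings[OF cH_col g_col] show ?thesis unfolding free_colorings_def by blast
qed

lemma restrict_EH_in_free_colorings:
  assumes "c \<in> free_colorings r k F V E"
  shows "restrict_coloring c EH \<in> free_colorings r k F VH EH"
proof -
  have c_col: "c \<in> colorings r E" and "F_free k F V E c"
    using assms unfolding free_colorings_def by auto
  then have "F_free k F VH E c" using F_free_iff_parts[of k F c] by blast
  moreover have "F_free k F VH EH (restrict_coloring c EH) \<longleftrightarrow> F_free k F VH E c"
  proof (rule F_free_H_cong)
    fix e assume "e \<subseteq> VH"
    then show "restrict_coloring c EH e = c e"
      using coloring_outside[OF c_col] by (auto simp: restrict_coloring_def)
  qed
  ultimately have "F_free k F VH EH (restrict_coloring c EH)" by blast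
  moreover have "restrict_coloring c EH \<in> colorings r EH"
    using c_col by (rule restrict_coloring_in_colorings) blast
  ultimately show ?thesis unfolding free_colorings_def by blast
qed

lemma restrict_star_in_extensions:
  assumes "c \<in> free_colorings r k F V E" and "s \<in> S"
  shows "restrict_coloring c (star E VH s) \<in> extensions r k F (restrict_coloring c EH) s"
proof -
  have c_col: "c \<in> colorings r E" and "F_free k F V E c"
    using assms unfolding free_colorings_def by auto
  then have "F_free k F (insert s VH) E c" using F_free_iff_parts[of k F c] assms(2) by blast
  moreover have "F_free k F (insert s VH) (EH \<union> star E VH s)
      (\<lambda>e. if e \<in> star E VH s then restrict_coloring c (star E VH s) e else restrict_coloring c EH e)
      \<longleftrightarrow> F_free k F (insert s VH) E c"
  proof (rule F_free_insert_cong[OF assms(2)])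
    fix e assume "e \<subseteq> insert s VH"
    have "c e = 0" if "e \<notin> EH" "e \<notin> star E VH s"
      using edge_within_insert[OF assms(2) \<open>e \<subseteq> insert s VH\<close>] that
      by (intro coloring_outside[OF c_col]) blast
    then show "(if e \<in> star E VH s then restrict_coloring c (star E VH s) e
        else restrict_coloring c EH e) = c e" by (simp add: restrict_coloring_def)
  qed
  ultimately have "F_free k F (insert s VH) (EH \<union> star E VH s)
      (\<lambda>e. if e \<in> star E VH s then restrict_coloring c (star E VH s) e else restrict_coloring c EH e)"
    by blast
  moreover have "restrict_coloring c (star E VH s) \<in> colorings r (star E VH s)"
    using c_col star_subset[of E VH s] by (rule restrict_coloring_in_colorings)
  ultimately show ?thesis unfolding extensions_def by blast
qed

lemma glue_restrict:
  assumes c: "c \<in> colorings r E"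
  shows "glue (restrict_coloring c EH) (\<lambda>s\<in>S. restrict_coloring c (star E VH s)) = c"
proof -
  define cH where "cH = restrict_coloring c EH"
  define g where "g = (\<lambda>s\<in>S. restrict_coloring c (star E VH s))"
  have cH_col: "cH \<in> colorings r EH"
    unfolding cH_def using c by (rule restrict_coloring_in_colorings) blast
  have g_col: "g s \<in> colorings r (star E VH s)" if "s \<in> S" for s
    unfolding g_def using that restrict_coloring_in_colorings[OF c star_subset[of E VH s]] by simp
  have "glue cH g e = c e" for e
  proof (cases "e \<in> E")
    case True
    from edge_in_EH_or_star[OF this] show ?thesis
    proof
      assume "e \<in> EH"
      then have "glue cH g e = cH e" by (intro glue_disjoint[OF cH_col g_col]) auto
      with \<open>e \<in> EH\<close> show ?thesis by (simp add: cH_def restrict_coloring_def)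
    next
      assume "\<exists>s\<in>S. e \<in> star E VH s"
      then obtain s where s: "s \<in> S" "e \<in> star E VH s" by blast
      then have "e \<subseteq> insert s VH" by (auto simp: star_iff)
      then have "glue cH g e = g s e" using glue_insert[OF cH_col g_col s(1)] s(2) by simp
      with s show ?thesis by (simp add: g_def restrict_coloring_def)
    qed
  next
    case False
    then show ?thesis
      using coloring_outside[OF glue_in_colorings[OF cH_col g_col]] coloring_outside[OF c] by simp
  qed
  then have "glue cH g = c" ..
  then show ?thesis unfolding cH_def g_def .
qed

lemma finite_extensions: "finite (extensions r k F cH s)"
proof -
  have "finite (star E VH s)" using finite_edges[OF graph] star_subset[of E VH s] by (rule finite_subset[rotated])
  then show ?thesis
    unfolding extensions_def by (rule finite_subset[OF _ finite_colorings, rotated]) blast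
qed

lemma bij_betw_glue:
  "bij_betw (case_prod glue) (SIGMA cH:free_colorings r k F VH EH. PiE S (extensions r k F cH))
    (free_colorings r k F V E)"
  (is "bij_betw _ ?D _")
proof (rule bij_betw_byWitness[where f' = "\<lambda>c. (restrict_coloring c EH, \<lambda>s\<in>S. restrict_coloring c (star E VH s))"])
  show "\<forall>p\<in>?D. (restrict_coloring (case_prod glue p) EH,
      \<lambda>s\<in>S. restrict_coloring (case_prod glue p) (star E VH s)) = p"
  proof
    fix p assume "p \<in> ?D"
    then obtain cH g where p: "p = (cH, g)" "cH \<in> free_colorings r k F VH EH"
      "g \<in> PiE S (extensions r k F cH)" by blast
    then have cH: "cH \<in> colorings r EH" and g: "\<And>s. s \<in> S \<Longrightarrow> g s \<in> colorings r (star E VH s)"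
      unfolding free_colorings_def extensions_def by auto
    have "(\<lambda>s\<in>S. restrict_coloring (glue cH g) (star E VH s)) = g"
    proof
      fix s
      show "(\<lambda>s\<in>S. restrict_coloring (glue cH g) (star E VH s)) s = g s"
        by (cases "s \<in> S") (simp_all add: restrict_glue_star[OF cH g] PiE_arb[OF p(3)])
    qed
    then show "(restrict_coloring (case_prod glue p) EH,
        \<lambda>s\<in>S. restrict_coloring (case_prod glue p) (star E VH s)) = p"
      using restrict_glue_EH[OF cH g] p(1) by simp
  qed
  show "\<forall>c\<in>free_colorings r k F V E.
      case_prod glue (restrict_coloring c EH, \<lambda>s\<in>S. restrict_coloring c (star E VH s)) = c"
  proof
    fix c assume "c \<in> free_colorings r k F V E"
    then have "c \<in> colorings r E" unfolding free_colorings_def by blast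
    then show "case_prod glue (restrict_coloring c EH, \<lambda>s\<in>S. restrict_coloring c (star E VH s)) = c"
      by (simp add: glue_restrict)
  qed
  show "case_prod glue ` ?D \<subseteq> free_colorings r k F V E"
  proof (rule image_subsetI)
    fix p assume "p \<in> ?D"
    then show "case_prod glue p \<in> free_colorings r k F V E"
      by (cases p) (simp add: glue_in_free_colorings)
  qed
  show "(\<lambda>c. (restrict_coloring c EH, \<lambda>s\<in>S. restrict_coloring c (star E VH s))) `
      free_colorings r k F V E \<subseteq> ?D"
  proof (rule image_subsetI)
    fix c assume c: "c \<in> free_colorings r k F V E"
    have "(\<lambda>s\<in>S. restrict_coloring c (star E VH s)) \<in> PiE S (extensions r k F (restrict_coloring c EH))"
      using restrict_star_in_extensions[OF c] by (simp add: restrict_PiE_iff)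
    then show "(restrict_coloring c EH, \<lambda>s\<in>S. restrict_coloring c (star E VH s)) \<in> ?D"
      using restrict_EH_in_free_colorings[OF c] by simp
  qed
qed

lemma count_free_eq_sum_prod_ext_count:
  "count_free r k F V E = (\<Sum>cH\<in>free_colorings r k F VH EH. \<Prod>s\<in>S. ext_count r k F E VH EH s cH)"
proof -
  have "count_free r k F V E = card (SIGMA cH:free_colorings r k F VH EH. PiE S (extensions r k F cH))"
    unfolding count_free_def by (rule bij_betw_same_card[OF bij_betw_glue, symmetric])
  also have "\<dots> = (\<Sum>cH\<in>free_colorings r k F VH EH. \<Prod>s\<in>S. ext_count r k F E VH EH s cH)"
  proof -
    have "finite EH" using finite_edges[OF graph] by simp
    then have "finite (free_colorings r k F VH EH)" by (rule finite_free_colorings)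
    moreover have "finite (PiE S (extensions r k F cH))" for cH
      using finite_S finite_extensions by (rule finite_PiE)
    ultimately show ?thesis by (simp add: card_PiE[OF finite_S] card_extensions)
  qed
  finally show ?thesis .
qed

text \<open>Zykov symmetrization: every vertex of \<open>S\<close> gets the neighbourhood of \<open>w\<close> in \<open>H\<close>.\<close>

definition clone_edges :: "'a \<Rightarrow> 'a set set" where
  "clone_edges w = EH \<union> {{s, x} | s x. s \<in> S \<and> x \<in> VH \<and> {w, x} \<in> E}"

lemma independent_set_clone: "independent_set V (clone_edges w) S"
proof
  have "e \<subseteq> V \<and> card e = 2" if "e \<in> clone_edges w" for e
  proof -
    from that consider "e \<in> EH" | s x where "e = {s, x}" "s \<in> S" "x \<in> VH"
      unfolding clone_edges_def by blast
    then show ?thesis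
    proof cases
      case 1
      then show ?thesis using graph unfolding graph_def by blast
    next
      case 2
      then have "s \<noteq> x" by blast
      then show ?thesis using 2 S_subset by auto
    qed
  qed
  then show "graph V (clone_edges w)" using graph unfolding graph_def by blast
  show "S \<subseteq> V" by (rule S_subset)
  show "\<forall>e\<in>clone_edges w. \<not> e \<subseteq> S"
    using independent unfolding clone_edges_def by blast
qed

lemma EH_clone: "{e \<in> clone_edges w. e \<inter> S = {}} = EH"
  unfolding clone_edges_def by blast

lemma star_clone:
  assumes "t \<in> S"
  shows "star (clone_edges w) VH t = {{t, x} | x. x \<in> VH \<and> {w, x} \<in> E}"
proof (rule set_eqI, rule iffI)
  fix e assume "e \<in> star (clone_edges w) VH t"
  then obtain y where y: "y \<in> VH" "e = {t, y}" "e \<in> clone_edges w" unfolding star_def by blast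
  then have "e \<notin> EH" using assms by blast
  then obtain s x where "e = {s, x}" "s \<in> S" "x \<in> VH" "{w, x} \<in> E"
    using y(3) unfolding clone_edges_def by blast
  moreover from this have "x = y" using y assms by (auto simp: doubleton_eq_iff)
  ultimately show "e \<in> {{t, x} | x. x \<in> VH \<and> {w, x} \<in> E}" using y by blast
next
  fix e assume "e \<in> {{t, x} | x. x \<in> VH \<and> {w, x} \<in> E}"
  then show "e \<in> star (clone_edges w) VH t"
    unfolding star_def clone_edges_def using assms by blast
qed

lemma ext_count_clone:
  assumes "t \<in> S" "w \<in> S" and cH: "cH \<in> colorings r EH"
  shows "ext_count r k F (clone_edges w) VH EH t cH = ext_count r k F E VH EH w cH"
proof -
  let ?h = "Transposition.transpose t w" and ?st = "star (clone_edges w) VH t"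
  have fixed: "?h x = x" if "x \<notin> S" for x
    using that assms by (metis transpose_apply_other)
  have fixed_set: "?h ` e = e" if "e \<inter> S = {}" for e
  proof -
    have "?h ` e = id ` e" using that fixed by (intro image_cong) auto
    then show ?thesis by simp
  qed
  have swap_edge: "?h ` {t, x} = {w, x}" if "x \<in> VH" for x
    using that fixed by simp
  have "(`) ?h ` ?st = {?h ` {t, x} | x. x \<in> VH \<and> {w, x} \<in> E}"
    unfolding star_clone[OF assms(1)] by blast
  also have "\<dots> = star E VH w"
    unfolding star_eq by (intro Collect_cong) (metis swap_edge)
  finally have star_w: "star E VH w = (`) ?h ` ?st" ..
  have "?h ` VH = VH" by (rule fixed_set) blast
  then have W: "?h ` insert t VH = insert w VH" by simp
  have "ext_count r k F (clone_edges w) VH EH t cH =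
      card {g \<in> colorings r ?st. F_free k F (insert t VH) (EH \<union> ?st) (\<lambda>e. if e \<in> ?st then g e else cH e)}"
    unfolding ext_count_def ..
  also have "\<dots> = card {g \<in> colorings r ((`) ?h ` ?st). F_free k F (?h ` insert t VH)
      (EH \<union> (`) ?h ` ?st) (\<lambda>e. if e \<in> (`) ?h ` ?st then g e else cH e)}"
  proof (rule card_extensions_image[OF transpose_involutory _ _ _ cH])
    show "\<forall>e\<in>EH. ?h ` e = e" using fixed_set by blast
    show "\<forall>e\<in>EH \<union> ?st. e \<subseteq> insert t VH"
      unfolding star_clone[OF assms(1)] using edge_subset by blast
    have "\<forall>e\<in>EH \<union> star E VH w. e \<subseteq> insert w VH"
      unfolding star_eq using edge_subset by blast
    then show "\<forall>e\<in>EH \<union> (`) ?h ` ?st. e \<subseteq> ?h ` insert t VH"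
      unfolding W star_w .
  qed
  also have "\<dots> = ext_count r k F E VH EH w cH"
    unfolding ext_count_def W star_w ..
  finally show ?thesis .
qed

lemma count_free_clone:
  assumes "w \<in> S"
  shows "count_free r k F V (clone_edges w) =
    (\<Sum>cH\<in>free_colorings r k F VH EH. ext_count r k F E VH EH w cH ^ card S)"
proof -
  have "count_free r k F V (clone_edges w) =
      (\<Sum>cH\<in>free_colorings r k F VH EH. \<Prod>t\<in>S. ext_count r k F (clone_edges w) VH EH t cH)"
    using independent_set.count_free_eq_sum_prod_ext_count[OF independent_set_clone] by (simp add: EH_clone)
  also have "\<dots> = (\<Sum>cH\<in>free_colorings r k F VH EH. \<Prod>t\<in>S. ext_count r k F E VH EH w cH)"
    using ext_count_clone[OF _ assms] unfolding free_colorings_def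
    by (intro sum.cong prod.cong) auto
  finally show ?thesis by simp
qed

lemma sum_power_ext_count_le:
  assumes "count_free r k F V E = count_free_n r k F (card V)"
  shows "(\<Sum>s\<in>S. \<Sum>cH\<in>free_colorings r k F VH EH. ext_count r k F E VH EH s cH ^ card S)
    \<le> card S * (\<Sum>cH\<in>free_colorings r k F VH EH. \<Prod>s\<in>S. ext_count r k F E VH EH s cH)"
proof -
  have "(\<Sum>s\<in>S. \<Sum>cH\<in>free_colorings r k F VH EH. ext_count r k F E VH EH s cH ^ card S)
      = (\<Sum>s\<in>S. count_free r k F V (clone_edges s))"
    by (simp add: count_free_clone)
  also have "\<dots> \<le> (\<Sum>s\<in>S. count_free r k F V E)"
    using count_free_le_count_free_n[OF independent_set.graph[OF independent_set_clone]] assms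
    by (intro sum_mono) simp
  also have "\<dots> = card S * (\<Sum>cH\<in>free_colorings r k F VH EH. \<Prod>s\<in>S. ext_count r k F E VH EH s cH)"
    by (simp add: count_free_eq_sum_prod_ext_count)
  finally show ?thesis .
qed

end

theorem corollary2p8:
  fixes V :: "'a set" and E :: "'a set set" and S :: "'a set"
    and F :: "nat set \<Rightarrow> nat" and r k :: nat and u v :: 'a
  assumes "r \<ge> 2" and "k \<ge> 3"
    and "F \<in> colorings r (Kedges k)"
    and "extremal r k F V E"
    and "S \<subseteq> V" and "\<forall>e\<in>E. \<not> e \<subseteq> S"
    and "u \<in> S" and "v \<in> S"
  shows "ext_vec r k F E (V - S) {e \<in> E. e \<inter> S = {}} u
       = ext_vec r k F E (V - S) {e \<in> E. e \<inter> S = {}} v"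
proof -
  \<comment> \<open>The argument works for every \<open>r\<close>, \<open>k\<close> and \<open>F\<close>.\<close>
  interpret independent_set V E S
    using assms(4-6) unfolding extremal_def by unfold_locales auto
  have extremal: "count_free r k F V E = count_free_n r k F (card V)"
    using assms(4) unfolding extremal_def by blast
  have "finite EH" using finite_edges[OF graph] by simp
  have "ext_count r k F E VH EH u cH = ext_count r k F E VH EH v cH"
    if "cH \<in> free_colorings r k F VH EH" for cH
    using eq_if_sum_power_sums_le[OF finite_free_colorings[OF \<open>finite EH\<close>] finite_S
        sum_power_ext_count_le[OF extremal] that assms(7,8)] .
  then show ?thesis unfolding ext_vec_def by auto
qed

end
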